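(* Let $n\geq 3$ and let $C_n^*$ be the bigraded complex described in the context. Let $D$ be a bigraded $S^3$-knotlike chain complex over $R$ and let $f\colon C_n^*\to D$ be a local map. Then there does not exist a local map $g\colon D\to C_n^*$ such that $g\circ f$ is homogeneous of bigrading $(c_1,c_2)$ with $c_1>-2n+2$ and $c_2>-2n$.
   Context: Let $\mathbb{F}=\mathbb{Z}/2$ and $R=\mathbb{F}[\mathcal{U},\mathcal{V}]$, bigraded by $(\operatorname{gr}_{\mathcal{U}},\operatorname{gr}_{\mathcal{V}})$ with $\mathcal{U}$ of bigrading $(-2,0)$ and $\mathcal{V}$ of bigrading $(0,-2)$; complexes have differentials of bigrading $(-1,-1)$. A local map between complexes over $R$ is an $R$-linear homogeneous chain map inducing an isomorphism on homology after localizing at $\mathcal{U}$ and $\mathcal{V}$ (i.e. after tensoring with $\mathbb{F}[\mathcal{U},\mathcal{V},\mathcal{U}^{-1},\mathcal{V}^{-1}]$). A map is homogeneous of bigrading $(c_1,c_2)$ if it sends elements of bigrading $(a,b)$ to elements of bigrading $(a+c_1,b+c_2)$. A complex $D$ over $R$ is $S^3$-knotlike if $H_*(D\otimes_R\mathbb{F}[\mathcal{U}])\cong\mathbb{F}[\mathcal{U}]$, where $\mathcal{V}$ acts on $\mathbb{F}[\mathcal{U}]$ as $1$. For $n\geq 3$, $C_n^*$ is the free $R$-module with basis $\alpha^*_s$ ($1\leq s\leq 2n-1$); $\widetilde{\alpha}^*_s$ ($1\leq s\leq n-2$ and $n+1\leq s\leq 2n-2$); $b^{*,(s)}_{n-1}$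 ($1\leq s\leq n-2$); $b^{*,(s)}_{n}$ ($1\leq s\leq 2n-2$); $b^{*,(s)}_{n+1}$ ($n+1\leq s\leq 2n-2$), with $R$-linear differential $\partial$ given by $\partial\alpha^*_s=0$, $\partial\widetilde{\alpha}^*_s=0$, and $\partial b^{*,(s)}_{n-1}=\mathcal{U}^{n(n-1)/2}\mathcal{V}^{n(n-1)/2}\alpha^*_s+\mathcal{V}^{n-s-1}\widetilde{\alpha}^*_s$ for $1\leq s\leq n-2$; $\partial b^{*,(s)}_{n}=\mathcal{U}^{n(n+1)/2-s}\mathcal{V}^{n(n+1)/2}\alpha^*_{s+1}+\mathcal{U}^{n}\widetilde{\alpha}^*_s$ for $1\leq s\leq n-2$; $\partial b^{*,(s)}_{n}=\mathcal{U}^{n(n+1)/2}\mathcal{V}^{n(n-1)/2-n+s+1}\alpha^*_s+\mathcal{U}^{n(n+1)/2-s}\mathcal{V}^{n(n+1)/2}\alpha^*_{s+1}$ for $n-1\leq s\leq n$; $\partial b^{*,(s)}_{n}=\mathcal{U}^{n(n+1)/2}\mathcal{V}^{n(n-1)/2-n+s+1}\alpha^*_s+\mathcal{V}^{n}\widetilde{\alpha}^*_s$ for $n+1\leq s\leq 2n-2$; $\partial b^{*,(s)}_{n+1}=\mathcal{U}^{n(n-1)/2}\mathcal{V}^{n(n-1)/2}\alpha^*_{s+1}+\mathcal{U}^{s-n}\widetilde{\alpha}^*_s$ for $n+1\leq s\leq 2n-2$. The basis elements are assigned bigradings so that $\partial$ is homogeneous of bigrading $(-1,-1)$ (unique up to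 an overall shift; any such choice is fixed). *)

theory Defs
  imports "HOL-Library.Z2" "HOL-Computational_Algebra.Polynomial"
    "HOL-Computational_Algebra.Fraction_Field"
begin

text \<open>R = (F[U])[V]: the outer polynomial variable is V, the inner one is U.\<close>
type_synonym R = "bit poly poly"

definition mono :: "nat \<Rightarrow> nat \<Rightarrow> R" where
  "mono p q = monom (monom 1 p) q"

definition hom_elt :: "R \<Rightarrow> int \<Rightarrow> int \<Rightarrow> bool" where
  "hom_elt r a b \<longleftrightarrow>
     (\<forall>p q. coeff (coeff r q) p \<noteq> 0 \<longrightarrow> a = - 2 * int p \<and> b = - 2 * int q)"

text \<open>A complex is given by a finite homogeneous basis (bas), the bigradings of the
  basis elements (grd), and the differential matrix: dmat C i j is the coefficient of
  basis element i in the differential of basis element j.\<close>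
record 'b fcx =
  bas :: "'b set"
  grd :: "'b \<Rightarrow> int \<times> int"
  dmat :: "'b \<Rightarrow> 'b \<Rightarrow> R"

definition is_fcx :: "'b fcx \<Rightarrow> bool" where
  "is_fcx C \<longleftrightarrow> finite (bas C)
    \<and> (\<forall>i j. (i \<notin> bas C \<or> j \<notin> bas C) \<longrightarrow> dmat C i j = 0)
    \<and> (\<forall>i\<in>bas C. \<forall>j\<in>bas C. hom_elt (dmat C i j)
          (fst (grd C j) - 1 - fst (grd C i)) (snd (grd C j) - 1 - snd (grd C i)))
    \<and> (\<forall>i j. (\<Sum>k\<in>bas C. dmat C i k * dmat C k j) = 0)"

text \<open>R-linear maps between free modules are matrices: M i j is the coefficient of
  basis element i of the target in the image of basis element j of the source.\<close>
definition hom_map :: "'a fcx \<Rightarrow> 'b fcx \<Rightarrow> ('b \<Rightarrow> 'a \<Rightarrow> R) \<Rightarrow> int \<Rightarrow> int \<Rightarrow> bool" where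
  "hom_map C D M c1 c2 \<longleftrightarrow>
     (\<forall>i j. (i \<notin> bas D \<or> j \<notin> bas C) \<longrightarrow> M i j = 0)
   \<and> (\<forall>i\<in>bas D. \<forall>j\<in>bas C. hom_elt (M i j)
          (fst (grd C j) + c1 - fst (grd D i)) (snd (grd C j) + c2 - snd (grd D i)))"

definition chain_map :: "'a fcx \<Rightarrow> 'b fcx \<Rightarrow> ('b \<Rightarrow> 'a \<Rightarrow> R) \<Rightarrow> bool" where
  "chain_map C D M \<longleftrightarrow>
     (\<forall>i j. (\<Sum>k\<in>bas D. dmat D i k * M k j) = (\<Sum>k\<in>bas C. M i k * dmat C k j))"

definition mat_comp :: "'b set \<Rightarrow> ('c \<Rightarrow> 'b \<Rightarrow> R) \<Rightarrow> ('b \<Rightarrow> 'a \<Rightarrow> R) \<Rightarrow> 'c \<Rightarrow> 'a \<Rightarrow> R" where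
  "mat_comp B G F = (\<lambda>i j. \<Sum>k\<in>B. G i k * F k j)"

text \<open>The Laurent ring F[U,V,U^-1,V^-1], realised inside the fraction field of R.\<close>
definition Lring :: "R fract set" where
  "Lring = {Fract p (mono a b) | p a b. True}"

definition Lvec :: "'b set \<Rightarrow> ('b \<Rightarrow> R fract) set" where
  "Lvec B = {v. (\<forall>i. i \<notin> B \<longrightarrow> v i = 0) \<and> (\<forall>i. v i \<in> Lring)}"

definition Lapp :: "'a set \<Rightarrow> ('b \<Rightarrow> 'a \<Rightarrow> R) \<Rightarrow> ('a \<Rightarrow> R fract) \<Rightarrow> 'b \<Rightarrow> R fract" where
  "Lapp A M v = (\<lambda>i. \<Sum>k\<in>A. Fract (M i k) 1 * v k)"

text \<open>The chain map M : C \<rightarrow> D induces an isomorphism (injective and surjective map)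
  H_*(C \<otimes> L) \<rightarrow> H_*(D \<otimes> L), L the Laurent ring.\<close>
definition loc_iso :: "'a fcx \<Rightarrow> 'b fcx \<Rightarrow> ('b \<Rightarrow> 'a \<Rightarrow> R) \<Rightarrow> bool" where
  "loc_iso C D M \<longleftrightarrow>
     (\<forall>y\<in>Lvec (bas D). (\<forall>i. Lapp (bas D) (dmat D) y i = 0) \<longrightarrow>
        (\<exists>x\<in>Lvec (bas C). (\<forall>i. Lapp (bas C) (dmat C) x i = 0) \<and>
           (\<exists>w\<in>Lvec (bas D). (\<lambda>i. y i - Lapp (bas C) M x i) = Lapp (bas D) (dmat D) w)))
   \<and> (\<forall>x\<in>Lvec (bas C). (\<forall>i. Lapp (bas C) (dmat C) x i = 0) \<longrightarrow>
        (\<exists>w\<in>Lvec (bas D). Lapp (bas C) M x = Lapp (bas D) (dmat D) w) \<longrightarrow>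
        (\<exists>u\<in>Lvec (bas C). x = Lapp (bas C) (dmat C) u))"

definition local_map :: "'a fcx \<Rightarrow> 'b fcx \<Rightarrow> ('b \<Rightarrow> 'a \<Rightarrow> R) \<Rightarrow> bool" where
  "local_map C D M \<longleftrightarrow> (\<exists>c1 c2. hom_map C D M c1 c2) \<and> chain_map C D M \<and> loc_iso C D M"

text \<open>D \<otimes>_R F[U] with V acting as 1: entries are evaluated at V = 1.\<close>
definition Uvec :: "'b set \<Rightarrow> ('b \<Rightarrow> bit poly) set" where
  "Uvec B = {v. \<forall>i. i \<notin> B \<longrightarrow> v i = 0}"

definition Uapp :: "'a set \<Rightarrow> ('b \<Rightarrow> 'a \<Rightarrow> R) \<Rightarrow> ('a \<Rightarrow> bit poly) \<Rightarrow> 'b \<Rightarrow> bit poly" where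
  "Uapp A M v = (\<lambda>i. \<Sum>k\<in>A. poly (M i k) 1 * v k)"

text \<open>H_*(D \<otimes> F[U]) \<cong> F[U] as F[U]-modules: there is a cycle z such that
  p \<mapsto> [p z] is an isomorphism F[U] \<rightarrow> H_*(D \<otimes> F[U]).\<close>
definition knotlike :: "'b fcx \<Rightarrow> bool" where
  "knotlike D \<longleftrightarrow> (\<exists>z\<in>Uvec (bas D). (\<forall>i. Uapp (bas D) (dmat D) z i = 0)
     \<and> (\<forall>y\<in>Uvec (bas D). (\<forall>i. Uapp (bas D) (dmat D) y i = 0) \<longrightarrow>
          (\<exists>p. \<exists>w\<in>Uvec (bas D). (\<lambda>i. y i - p * z i) = Uapp (bas D) (dmat D) w))
     \<and> (\<forall>p. (\<exists>w\<in>Uvec (bas D). (\<lambda>i. p * z i) = Uapp (bas D) (dmat D) w) \<longrightarrow> p = 0))"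

text \<open>Generators: Al s = alpha*_s, At s = tilde alpha*_s, Bm s = b*^(s)_{n-1},
  Bz s = b*^(s)_n, Bp s = b*^(s)_{n+1}.\<close>
datatype gen = Al nat | At nat | Bm nat | Bz nat | Bp nat

definition Cbas :: "nat \<Rightarrow> gen set" where
  "Cbas n = {Al s | s. 1 \<le> s \<and> s \<le> 2*n-1}
    \<union> {At s | s. (1 \<le> s \<and> s \<le> n-2) \<or> (n+1 \<le> s \<and> s \<le> 2*n-2)}
    \<union> {Bm s | s. 1 \<le> s \<and> s \<le> n-2}
    \<union> {Bz s | s. 1 \<le> s \<and> s \<le> 2*n-2}
    \<union> {Bp s | s. n+1 \<le> s \<and> s \<le> 2*n-2}"

fun Cdif :: "nat \<Rightarrow> gen \<Rightarrow> gen \<Rightarrow> R" where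
  "Cdif n i (Bm s) =
     (if 1 \<le> s \<and> s \<le> n-2 then
        (if i = Al s then mono (n*(n-1) div 2) (n*(n-1) div 2)
         else if i = At s then mono 0 (n-s-1) else 0)
      else 0)"
| "Cdif n i (Bz s) =
     (if 1 \<le> s \<and> s \<le> n-2 then
        (if i = Al (s+1) then mono (n*(n+1) div 2 - s) (n*(n+1) div 2)
         else if i = At s then mono n 0 else 0)
      else if n-1 \<le> s \<and> s \<le> n then
        (if i = Al s then mono (n*(n+1) div 2) (n*(n-1) div 2 - n + s + 1)
         else if i = Al (s+1) then mono (n*(n+1) div 2 - s) (n*(n+1) div 2) else 0)
      else if n+1 \<le> s \<and> s \<le> 2*n-2 then
        (if i = Al s then mono (n*(n+1) div 2) (n*(n-1) div 2 - n + s + 1)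
         else if i = At s then mono 0 n else 0)
      else 0)"
| "Cdif n i (Bp s) =
     (if n+1 \<le> s \<and> s \<le> 2*n-2 then
        (if i = Al (s+1) then mono (n*(n-1) div 2) (n*(n-1) div 2)
         else if i = At s then mono (s-n) 0 else 0)
      else 0)"
| "Cdif n i (Al s) = 0"
| "Cdif n i (At s) = 0"

text \<open>C_n^* with a bigrading gr of the generators (the bigrading is determined by
  homogeneity of the differential up to an overall shift).\<close>
definition Cn :: "nat \<Rightarrow> (gen \<Rightarrow> int \<times> int) \<Rightarrow> gen fcx" where
  "Cn n gr = \<lparr>bas = Cbas n, grd = gr, dmat = Cdif n\<rparr>"

end

theory Submission
  imports Defs
begin

text \<open>
  Write h = g o f, tri = n(n-1)/2, and alpha_n for the middle generator of C_n^*.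

  Every column of the differential of C_n^* has zero or two nonzero entries, and a nonzero
  homogeneous element of R is a monomial.  So the functional sending each generator to the
  monomial that lifts it to a common top bigrading vanishes on all boundaries (in characteristic
  2), but not on alpha_n: the cycle alpha_n survives localization, hence survives the composite
  of local maps h.  The gradings forced by the differential put every other generator at least
  2n - 2 below alpha_n in gr_U or at least 2n below it in gr_V, so the degree bound on h makes
  the alpha_n-coefficient of h(alpha_n) a monomial U^p V^q with p < n - 1, and h(alpha_(n-1))
  has no alpha_n-coefficient.

  Now set V = 1.  Then t = alpha_n + U^(n-1) alpha_(n-1) is a cycle with
  U^(tri+1) t = d b_n^(n-1).  As H_*(D (x) F[U]) = F[U] is torsion free, f(t) is a boundary, hence
  so is h(t).  But every boundary of C_n^* (x) F[U] has alpha_n-coefficient divisible by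
  U^(tri+1), while that of h(t) is U^p with p < n - 1 <= tri.
\<close>

lemma coeff_coeff_mono: "coeff (coeff (mono p q) q') p' = (if p' = p \<and> q' = q then 1 else 0)"
  by (auto simp: mono_def)

lemma mono_nonzero [simp]: "mono p q \<noteq> 0"
  by (metis coeff_0 coeff_coeff_mono zero_neq_one)

lemma mono_mult_mono: "mono a b * mono c d = mono (a + c) (b + d)"
  by (simp add: mono_def mult_monom)

lemma poly_mono_1: "poly (mono p q) 1 = monom 1 p"
  by (simp add: mono_def poly_monom)

lemma of_nat_R_even: "even k \<Longrightarrow> (of_nat k :: R) = 0"
  by (auto elim!: evenE simp: numeral_poly)

lemma monom_1_dvd_monom_1_iff: "monom (1::'a::idom) a dvd monom 1 b \<longleftrightarrow> a \<le> b"
  by (auto simp: monom_1_dvd_iff' coeff_monom)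

lemma hom_elt_mono_iff: "hom_elt (mono p q) a b \<longleftrightarrow> a = - 2 * int p \<and> b = - 2 * int q"
  unfolding hom_elt_def coeff_coeff_mono by (metis one_neq_zero)

lemma hom_elt_nonzero_eq_mono:
  assumes "hom_elt r a b" "r \<noteq> 0"
  obtains p q where "a = - 2 * int p" "b = - 2 * int q" "r = mono p q"
proof -
  obtain q where "coeff r q \<noteq> 0" using assms(2) by (metis leading_coeff_0_iff)
  then obtain p where nz: "coeff (coeff r q) p \<noteq> 0" by (metis leading_coeff_0_iff)
  then have a: "a = - 2 * int p" and b: "b = - 2 * int q"
    using assms(1) unfolding hom_elt_def by auto
  have "r = mono p q"
  proof (intro poly_eqI)
    fix q' p'
    show "coeff (coeff r q') p' = coeff (coeff (mono p q) q') p'"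
    proof (cases "p' = p \<and> q' = q")
      case True
      then show ?thesis using nz by (simp add: coeff_coeff_mono)
    next
      case False
      then have "coeff (coeff r q') p' = 0"
        using assms(1) unfolding hom_elt_def a b by force
      with False show ?thesis by (simp add: coeff_coeff_mono)
    qed
  qed
  with a b that show ?thesis by blast
qed

definition unit_vec :: "'b \<Rightarrow> 'b \<Rightarrow> 'a::zero_neq_one" where
  "unit_vec j = (\<lambda>k. if k = j then 1 else 0)"

lemma Fract_sum: "Fract (sum f A) 1 = (\<Sum>x\<in>A. Fract (f x) (1::'a::idom))"
proof (induction A rule: infinite_finite_induct)
  case (insert x F)
  then show ?case by (simp flip: insert.IH)
qed (simp_all add: Zero_fract_def)

lemma Lapp_mat_comp: "Lapp B M (Lapp A N v) = Lapp A (mat_comp B M N) v"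
proof
  fix i
  have "Lapp B M (Lapp A N v) i = (\<Sum>k\<in>B. \<Sum>j\<in>A. Fract (M i k) 1 * (Fract (N k j) 1 * v j))"
    unfolding Lapp_def by (simp add: sum_distrib_left)
  also have "\<dots> = (\<Sum>j\<in>A. \<Sum>k\<in>B. Fract (M i k * N k j) 1 * v j)"
    by (subst sum.swap) (simp add: mult.assoc[symmetric])
  also have "\<dots> = Lapp A (mat_comp B M N) v i"
    unfolding Lapp_def mat_comp_def by (simp add: Fract_sum sum_distrib_right)
  finally show "Lapp B M (Lapp A N v) i = Lapp A (mat_comp B M N) v i" .
qed

lemma Uapp_mat_comp: "Uapp B M (Uapp A N v) = Uapp A (mat_comp B M N) v"
proof
  fix i
  have "Uapp B M (Uapp A N v) i = (\<Sum>k\<in>B. \<Sum>j\<in>A. poly (M i k) 1 * (poly (N k j) 1 * v j))"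
    unfolding Uapp_def by (simp add: sum_distrib_left)
  also have "\<dots> = (\<Sum>j\<in>A. \<Sum>k\<in>B. poly (M i k * N k j) 1 * v j)"
    by (subst sum.swap) (simp add: mult.assoc)
  also have "\<dots> = Uapp A (mat_comp B M N) v i"
    unfolding Uapp_def mat_comp_def by (simp add: poly_sum sum_distrib_right)
  finally show "Uapp B M (Uapp A N v) i = Uapp A (mat_comp B M N) v i" .
qed

lemma Lapp_unit_vec: "finite A \<Longrightarrow> j \<in> A \<Longrightarrow> Lapp A M (unit_vec j) = (\<lambda>i. Fract (M i j) 1)"
  unfolding Lapp_def unit_vec_def by (simp add: if_distrib cong: if_cong)

lemma Uapp_unit_vec: "finite A \<Longrightarrow> j \<in> A \<Longrightarrow> Uapp A M (unit_vec j) = (\<lambda>i. poly (M i j) 1)"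
  unfolding Uapp_def unit_vec_def by (simp add: if_distrib cong: if_cong)

lemma Lapp_zero: "Lapp A M (\<lambda>_. 0) = (\<lambda>_. 0)"
  by (simp add: Lapp_def)

lemma Uapp_zero: "Uapp A M (\<lambda>_. 0) = (\<lambda>_. 0)"
  by (simp add: Uapp_def)

lemma Uapp_scale: "Uapp A M (\<lambda>k. c * v k) = (\<lambda>i. c * Uapp A M v i)"
  unfolding Uapp_def by (simp add: sum_distrib_left mult.left_commute)

lemma Uapp_diff: "Uapp A M (\<lambda>k. v k - v' k) = (\<lambda>i. Uapp A M v i - Uapp A M v' i)"
  unfolding Uapp_def by (simp add: right_diff_distrib sum_subtractf)

lemma Uapp_in_Uvec: "(\<And>i k. i \<notin> B \<Longrightarrow> M i k = 0) \<Longrightarrow> Uapp A M v \<in> Uvec B"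
  by (simp add: Uvec_def Uapp_def)

lemma Fract_1_eq_0_iff [simp]: "Fract a 1 = 0 \<longleftrightarrow> (a::'a::idom) = 0"
  by (simp add: Zero_fract_def eq_fract)

lemma Fract_in_Lring: "Fract r 1 \<in> Lring"
  unfolding Lring_def by (metis (mono_tags) mem_Collect_eq mono_def monom_eq_1)

lemma zero_in_Lring: "0 \<in> Lring"
  using Fract_in_Lring[of 0] by (simp add: Zero_fract_def)

lemma unit_vec_in_Lvec: "j \<in> B \<Longrightarrow> unit_vec j \<in> Lvec B"
  using Fract_in_Lring[of 0] Fract_in_Lring[of 1]
  by (auto simp: Lvec_def unit_vec_def fract_collapse)

lemma chain_map_mat_comp:
  "chain_map C D M \<longleftrightarrow> mat_comp (bas D) (dmat D) M = mat_comp (bas C) M (dmat C)"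
  unfolding chain_map_def mat_comp_def by (simp add: fun_eq_iff)

lemma Lapp_chain_map:
  "chain_map C D M \<Longrightarrow>
    Lapp (bas C) M (Lapp (bas C) (dmat C) w) = Lapp (bas D) (dmat D) (Lapp (bas C) M w)"
  by (simp add: Lapp_mat_comp chain_map_mat_comp)

lemma Uapp_chain_map:
  "chain_map C D M \<Longrightarrow>
    Uapp (bas C) M (Uapp (bas C) (dmat C) w) = Uapp (bas D) (dmat D) (Uapp (bas C) M w)"
  by (simp add: Uapp_mat_comp chain_map_mat_comp)

lemma hom_map_outside: "hom_map C D M c1 c2 \<Longrightarrow> i \<notin> bas D \<Longrightarrow> M i j = 0"
  by (simp add: hom_map_def)

lemma hom_map_nonzero_entry:
  assumes "hom_map C D M c1 c2" "M i j \<noteq> 0"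
  obtains p q where "i \<in> bas D" "j \<in> bas C" "M i j = mono p q"
    "fst (grd D i) = fst (grd C j) + c1 + 2 * int p" "snd (grd D i) = snd (grd C j) + c2 + 2 * int q"
proof -
  have ij: "i \<in> bas D" "j \<in> bas C" using assms unfolding hom_map_def by auto
  with assms(1) have
    "hom_elt (M i j) (fst (grd C j) + c1 - fst (grd D i)) (snd (grd C j) + c2 - snd (grd D i))"
    unfolding hom_map_def by blast
  with assms(2) ij that show ?thesis by (elim hom_elt_nonzero_eq_mono) auto
qed

lemma dmat_mono_grd:
  assumes "is_fcx C" "dmat C i j = mono p q"
  shows "fst (grd C i) = fst (grd C j) - 1 + 2 * int p" "snd (grd C i) = snd (grd C j) - 1 + 2 * int q"
proof -
  have "i \<in> bas C" "j \<in> bas C"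
    using assms mono_nonzero unfolding is_fcx_def by metis+
  with assms hom_elt_mono_iff[of p q]
  show "fst (grd C i) = fst (grd C j) - 1 + 2 * int p" "snd (grd C i) = snd (grd C j) - 1 + 2 * int q"
    unfolding is_fcx_def by force+
qed

lemma loc_iso_reflects_boundaries:
  assumes "loc_iso C D M" "x \<in> Lvec (bas C)" "Lapp (bas C) (dmat C) x = (\<lambda>_. 0)"
    and "w \<in> Lvec (bas D)" "Lapp (bas C) M x = Lapp (bas D) (dmat D) w"
  obtains u where "u \<in> Lvec (bas C)" "x = Lapp (bas C) (dmat C) u"
proof -
  have "\<forall>x\<in>Lvec (bas C). (\<forall>i. Lapp (bas C) (dmat C) x i = 0) \<longrightarrow>
          (\<exists>w\<in>Lvec (bas D). Lapp (bas C) M x = Lapp (bas D) (dmat D) w) \<longrightarrow>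
          (\<exists>u\<in>Lvec (bas C). x = Lapp (bas C) (dmat C) u)"
    using assms(1) unfolding loc_iso_def by (rule conjunct2)
  with assms(2-) that show ?thesis by auto
qed

lemma local_map_comp_column_nonzero:
  assumes F: "local_map C D F" and G: "local_map D C G"
    and C: "finite (bas C)" "j \<in> bas C"
    and cycle: "\<And>i. dmat C i j = 0"
    and not_boundary: "\<And>u. unit_vec j \<noteq> Lapp (bas C) (dmat C) u"
  shows "\<exists>i. mat_comp (bas D) G F i j \<noteq> 0"
proof (rule ccontr)
  assume "\<not> ?thesis"
  then have comp_zero: "Lapp (bas D) G (Lapp (bas C) F (unit_vec j)) = (\<lambda>_. 0)"
    by (subst Lapp_mat_comp) (simp add: Lapp_unit_vec[OF C] fract_collapse)
  obtain c1 c2 where F_hom: "hom_map C D F c1 c2" and F_chain: "chain_map C D F"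
    and F_iso: "loc_iso C D F"
    using F unfolding local_map_def by blast
  have F_outside: "\<And>i. i \<notin> bas D \<Longrightarrow> F i j = 0" using hom_map_outside[OF F_hom] .
  have G_iso: "loc_iso D C G" using G unfolding local_map_def by blast
  have x_cycle: "Lapp (bas C) (dmat C) (unit_vec j) = (\<lambda>_. 0)"
    by (simp add: Lapp_unit_vec[OF C] cycle fract_collapse)
  define y where "y = Lapp (bas C) F (unit_vec j)"
  have y_vec: "y \<in> Lvec (bas D)"
    by (simp add: y_def Lapp_unit_vec[OF C] Lvec_def Fract_in_Lring F_outside)
  have y_cycle: "Lapp (bas D) (dmat D) y = (\<lambda>_. 0)"
    using Lapp_chain_map[OF F_chain, of "unit_vec j"] by (simp add: y_def x_cycle Lapp_zero)
  have "\<exists>w\<in>Lvec (bas C). Lapp (bas D) G y = Lapp (bas C) (dmat C) w"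
    by (rule bexI[of _ "\<lambda>_. 0"]) (simp_all add: y_def comp_zero Lapp_zero Lvec_def zero_in_Lring)
  then obtain u where "u \<in> Lvec (bas D)" "y = Lapp (bas D) (dmat D) u"
    using loc_iso_reflects_boundaries[OF G_iso y_vec y_cycle] by blast
  then obtain u' where "unit_vec j = Lapp (bas C) (dmat C) u'"
    by (metis loc_iso_reflects_boundaries[OF F_iso unit_vec_in_Lvec[OF C(2)] x_cycle] y_def)
  with not_boundary show False by blast
qed

lemma knotlike_torsion_free:
  assumes "knotlike D" "y \<in> Uvec (bas D)" "Uapp (bas D) (dmat D) y = (\<lambda>_. 0)"
    and "c \<noteq> 0" "e \<in> Uvec (bas D)" "Uapp (bas D) (dmat D) e = (\<lambda>i. c * y i)"
  obtains w where "w \<in> Uvec (bas D)" "y = Uapp (bas D) (dmat D) w"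
proof -
  obtain z where
    generates: "\<forall>y\<in>Uvec (bas D). (\<forall>i. Uapp (bas D) (dmat D) y i = 0) \<longrightarrow>
       (\<exists>p. \<exists>w\<in>Uvec (bas D). (\<lambda>i. y i - p * z i) = Uapp (bas D) (dmat D) w)"
    and free: "\<forall>p. (\<exists>w\<in>Uvec (bas D). (\<lambda>i. p * z i) = Uapp (bas D) (dmat D) w) \<longrightarrow> p = 0"
    using assms(1) unfolding knotlike_def by blast
  obtain p w where w: "w \<in> Uvec (bas D)" and y_eq: "(\<lambda>i. y i - p * z i) = Uapp (bas D) (dmat D) w"
    using generates assms(2,3) by force
  have "(\<lambda>i. (c * p) * z i) = Uapp (bas D) (dmat D) (\<lambda>k. e k - c * w k)"
    unfolding Uapp_diff Uapp_scale assms(6) y_eq[symmetric] by (simp add: algebra_simps)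
  moreover have "(\<lambda>k. e k - c * w k) \<in> Uvec (bas D)"
    using assms(5) w by (simp add: Uvec_def)
  ultimately have "c * p = 0" using free by blast
  with assms(4) have "p = 0" by simp
  with y_eq w that show ?thesis by simp
qed

definition even_columns :: "'b fcx \<Rightarrow> bool" where
  "even_columns C \<longleftrightarrow> (\<forall>j. even (card {i \<in> bas C. dmat C i j \<noteq> 0}))"

text \<open>Multiplying generator i by its weight moves it (up to parity) to the top bigrading.  So
  every nonzero entry d_ij, a monomial of the degree forced by homogeneity, contributes the same
  monomial to the sum over i of weight_i * d_ij, which therefore vanishes on even columns.\<close>

definition grading_weight :: "'b fcx \<Rightarrow> 'b \<Rightarrow> R" where
  "grading_weight C i =
     mono (nat ((Max (fst ` grd C ` bas C) - fst (grd C i)) div 2))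
          (nat ((Max (snd ` grd C ` bas C) - snd (grd C i)) div 2))"

lemma half_distance_shift:
  fixes top g gi :: int
  assumes "gi = g - 1 + 2 * int p" "gi \<le> top"
  shows "nat ((top - gi) div 2) + p = nat ((top - g + 1) div 2)"
  using assms by simp

lemma grading_weight_mult_dmat:
  assumes "is_fcx C" "i \<in> bas C" "j \<in> bas C" "dmat C i j \<noteq> 0"
  shows "grading_weight C i * dmat C i j =
     mono (nat ((Max (fst ` grd C ` bas C) - fst (grd C j) + 1) div 2))
          (nat ((Max (snd ` grd C ` bas C) - snd (grd C j) + 1) div 2))"
proof -
  have "hom_elt (dmat C i j) (fst (grd C j) - 1 - fst (grd C i)) (snd (grd C j) - 1 - snd (grd C i))"
    using assms(1-3) unfolding is_fcx_def by blast
  then obtain p q where entry: "dmat C i j = mono p q"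
    and "fst (grd C i) = fst (grd C j) - 1 + 2 * int p" "snd (grd C i) = snd (grd C j) - 1 + 2 * int q"
    using assms(4) by (elim hom_elt_nonzero_eq_mono) auto
  moreover have "fst (grd C i) \<le> Max (fst ` grd C ` bas C)" "snd (grd C i) \<le> Max (snd ` grd C ` bas C)"
    using assms(1,2) unfolding is_fcx_def by auto
  ultimately show ?thesis
    unfolding grading_weight_def entry mono_mult_mono by (simp only: half_distance_shift)
qed

lemma grading_weight_annihilates_dmat:
  assumes C: "is_fcx C" and even: "even_columns C"
  shows "(\<Sum>i\<in>bas C. grading_weight C i * dmat C i j) = 0"
proof (cases "j \<in> bas C")
  case False
  with C show ?thesis unfolding is_fcx_def by simp
next
  case True
  let ?S = "{i \<in> bas C. dmat C i j \<noteq> 0}"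
  let ?m = "mono (nat ((Max (fst ` grd C ` bas C) - fst (grd C j) + 1) div 2))
                 (nat ((Max (snd ` grd C ` bas C) - snd (grd C j) + 1) div 2))"
  have fin: "finite (bas C)" using C unfolding is_fcx_def by blast
  have "(\<Sum>i\<in>bas C. grading_weight C i * dmat C i j) = (\<Sum>i\<in>?S. grading_weight C i * dmat C i j)"
    by (rule sum.mono_neutral_right) (use fin in auto)
  also have "\<dots> = (\<Sum>i\<in>?S. ?m)"
    by (rule sum.cong) (simp_all add: grading_weight_mult_dmat[OF C _ True])
  also have "\<dots> = of_nat (card ?S) * ?m" by simp
  also have "\<dots> = 0" using even unfolding even_columns_def by (simp add: of_nat_R_even)
  finally show ?thesis .
qed

lemma unit_vec_not_localized_boundary:
  assumes C: "is_fcx C" "even_columns C" and j: "j \<in> bas C"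
  shows "unit_vec j \<noteq> Lapp (bas C) (dmat C) u"
proof
  assume boundary: "unit_vec j = Lapp (bas C) (dmat C) u"
  have fin: "finite (bas C)" using C unfolding is_fcx_def by blast
  let ?w = "\<lambda>_::unit. grading_weight C"
  have "Lapp (bas C) ?w (unit_vec j) = (\<lambda>_. Fract (grading_weight C j) 1)"
    by (simp add: Lapp_unit_vec[OF fin j])
  moreover have "Lapp (bas C) ?w (Lapp (bas C) (dmat C) u) = (\<lambda>_. 0)"
    unfolding Lapp_mat_comp
    by (simp add: mat_comp_def grading_weight_annihilates_dmat[OF C] Lapp_def fract_collapse)
  ultimately show False
    using boundary by (metis Fract_1_eq_0_iff grading_weight_def mono_nonzero)
qed

lemma Al_in_Cbas [simp]: "Al s \<in> Cbas n \<longleftrightarrow> 1 \<le> s \<and> s \<le> 2 * n - 1"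
  and At_in_Cbas [simp]: "At s \<in> Cbas n \<longleftrightarrow> (1 \<le> s \<and> s \<le> n - 2) \<or> (n + 1 \<le> s \<and> s \<le> 2 * n - 2)"
  and Bm_in_Cbas [simp]: "Bm s \<in> Cbas n \<longleftrightarrow> 1 \<le> s \<and> s \<le> n - 2"
  and Bz_in_Cbas [simp]: "Bz s \<in> Cbas n \<longleftrightarrow> 1 \<le> s \<and> s \<le> 2 * n - 2"
  and Bp_in_Cbas [simp]: "Bp s \<in> Cbas n \<longleftrightarrow> n + 1 \<le> s \<and> s \<le> 2 * n - 2"
  by (auto simp: Cbas_def)

lemma Cn_simps [simp]: "bas (Cn n gr) = Cbas n" "grd (Cn n gr) = gr" "dmat (Cn n gr) = Cdif n"
  by (simp_all add: Cn_def)

text \<open>alpha_n + U^(n-1) alpha_(n-1): the boundary of b_n^(n-1) in C_n^* (x) F[U], divided by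
  U^(tri+1).\<close>

definition Ucycle :: "nat \<Rightarrow> gen \<Rightarrow> bit poly" where
  "Ucycle n = (\<lambda>k. if k = Al n then 1 else if k = Al (n - 1) then monom 1 (n - 1) else 0)"

lemma Uapp_Cdif_Ucycle: "Uapp (Cbas n) (Cdif n) (Ucycle n) = (\<lambda>_. 0)"
  unfolding Uapp_def Ucycle_def by (auto intro!: sum.neutral)

locale Cn_complex =
  fixes n :: nat and gr :: "gen \<Rightarrow> int \<times> int"
  assumes n_ge_3: "3 \<le> n" and is_fcx_Cn: "is_fcx (Cn n gr)"
begin

abbreviation grU :: "gen \<Rightarrow> int" where "grU i \<equiv> fst (gr i)"
abbreviation grV :: "gen \<Rightarrow> int" where "grV i \<equiv> snd (gr i)"
abbreviation tri :: nat where "tri \<equiv> n * (n - 1) div 2"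

lemma tri_Suc: "n * (n + 1) div 2 = tri + n"
proof -
  have "n * (n + 1) = n * (n - 1) + 2 * n" using n_ge_3 by (cases n) (simp_all add: algebra_simps)
  then show ?thesis by simp
qed

lemma n_le_tri: "n \<le> tri"
proof -
  have "2 * n \<le> n * (n - 1)" using n_ge_3 by (simp add: mult.commute)
  then show ?thesis by linarith
qed

lemma finite_Cbas: "finite (Cbas n)"
  using is_fcx_Cn unfolding is_fcx_def by simp

lemma Cdif_grd:
  assumes "Cdif n i j = mono p q"
  shows "grU i = grU j - 1 + 2 * int p" "grV i = grV j - 1 + 2 * int q"
  using dmat_mono_grd[OF is_fcx_Cn] assms by simp_all

lemma Cdif_Bz_n_minus_1:
  "Cdif n i (Bz (n - 1)) =
     (if i = Al (n - 1) then mono (tri + n) tri else if i = Al n then mono (tri + 1) (tri + n) else 0)"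
proof -
  have "n * (n + 1) div 2 = tri + n" "Suc (n - 1) = n" "\<not> n - 1 \<le> n - 2"
    "tri - n + (n - 1) + 1 = tri" "tri + n - (n - 1) = tri + 1"
    using tri_Suc n_le_tri n_ge_3 by auto
  then show ?thesis by auto
qed

lemma Cdif_Bz_n:
  "Cdif n i (Bz n) =
     (if i = Al n then mono (tri + n) (tri + 1) else if i = Al (n + 1) then mono tri (tri + n) else 0)"
proof -
  have "n * (n + 1) div 2 = tri + n" "\<not> n \<le> n - 2" "tri - n + n + 1 = tri + 1"
    using tri_Suc n_le_tri n_ge_3 by auto
  then show ?thesis by auto
qed

lemma Cdif_Al_n_row:
  "Cdif n (Al n) k =
     (if k = Bz (n - 1) then mono (tri + 1) (tri + n) else if k = Bz n then mono (tri + n) (tri + 1) else 0)"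
proof (cases k)
  case (Bz s)
  have "n - 1 \<noteq> n" using n_ge_3 by simp
  consider "s = n - 1" | "s = n" | "s \<noteq> n - 1" "s \<noteq> n" by blast
  then show ?thesis
  proof cases
    case 1
    with \<open>n - 1 \<noteq> n\<close> show ?thesis unfolding Bz 1 Cdif_Bz_n_minus_1 by simp
  next
    case 2
    with \<open>n - 1 \<noteq> n\<close> show ?thesis unfolding Bz 2 Cdif_Bz_n by simp
  next
    case 3
    with Bz show ?thesis by (simp add: le_diff_conv2)
  qed
qed (use n_ge_3 in auto)

lemma grV_lower_range:
  assumes "1 \<le> s" "s \<le> n - 2"
  shows "grV (Al s) \<le> grV (Al (s + 1))" "grV (At s) < grV (Al (s + 1))"
    "grV (Bm s) < grV (Al s)" "grV (Bz s) < grV (Al (s + 1))"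
proof -
  have "Cdif n (Al s) (Bm s) = mono tri tri" "Cdif n (At s) (Bm s) = mono 0 (n - s - 1)"
    "Cdif n (Al (s + 1)) (Bz s) = mono (n * (n + 1) div 2 - s) (n * (n + 1) div 2)"
    "Cdif n (At s) (Bz s) = mono n 0"
    using assms by simp_all
  note grading = this[THEN Cdif_grd(2)]
  from grading show "grV (Al s) \<le> grV (Al (s + 1))" "grV (At s) < grV (Al (s + 1))"
    "grV (Bm s) < grV (Al s)" "grV (Bz s) < grV (Al (s + 1))"
    using tri_Suc n_le_tri n_ge_3 by linarith+
qed

lemma grd_Bz_n_minus_1:
  shows "grU (Al (n - 1)) = grU (Al n) + 2 * int n - 2" "grV (Al (n - 1)) = grV (Al n) - 2 * int n"
    "grU (Bz (n - 1)) \<le> grU (Al n) - 2 * int n + 2"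
proof -
  have "Al (n - 1) \<noteq> Al n" using n_ge_3 by simp
  then have "Cdif n (Al (n - 1)) (Bz (n - 1)) = mono (tri + n) tri"
    "Cdif n (Al n) (Bz (n - 1)) = mono (tri + 1) (tri + n)"
    unfolding Cdif_Bz_n_minus_1 by simp_all
  note grading =
    this[THEN Cdif_grd(1), unfolded of_nat_add] this[THEN Cdif_grd(2), unfolded of_nat_add]
  then show "grU (Al (n - 1)) = grU (Al n) + 2 * int n - 2" "grV (Al (n - 1)) = grV (Al n) - 2 * int n"
    "grU (Bz (n - 1)) \<le> grU (Al n) - 2 * int n + 2"
    using n_le_tri by (simp_all add: algebra_simps)
qed

lemma grd_Bz_n:
  shows "grU (Al (n + 1)) = grU (Al n) - 2 * int n" "grU (Bz n) \<le> grU (Al n) - 2 * int n + 2"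
proof -
  have "Cdif n (Al n) (Bz n) = mono (tri + n) (tri + 1)" "Cdif n (Al (n + 1)) (Bz n) = mono tri (tri + n)"
    unfolding Cdif_Bz_n by simp_all
  note grading = this[THEN Cdif_grd(1), unfolded of_nat_add]
  then show "grU (Al (n + 1)) = grU (Al n) - 2 * int n" "grU (Bz n) \<le> grU (Al n) - 2 * int n + 2"
    by (simp_all add: algebra_simps)
qed

lemma grU_upper_range:
  assumes "n + 1 \<le> s" "s \<le> 2 * n - 2"
  shows "grU (Al (s + 1)) \<le> grU (Al s)" "grU (At s) < grU (Al s)"
    "grU (Bz s) < grU (Al s)" "grU (Bp s) < grU (Al (s + 1))"
proof -
  have "Cdif n (Al s) (Bz s) = mono (n * (n + 1) div 2) (tri - n + s + 1)" "Cdif n (At s) (Bz s) = mono 0 n"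
    "Cdif n (Al (s + 1)) (Bp s) = mono tri tri" "Cdif n (At s) (Bp s) = mono (s - n) 0"
    using assms by (simp_all add: le_diff_conv2)
  note grading = this[THEN Cdif_grd(1)]
  from grading show "grU (Al (s + 1)) \<le> grU (Al s)" "grU (At s) < grU (Al s)"
    "grU (Bz s) < grU (Al s)" "grU (Bp s) < grU (Al (s + 1))"
    using tri_Suc n_le_tri n_ge_3 by linarith+
qed

lemma grV_Al_below:
  assumes "1 \<le> s" "s \<le> n - 1"
  shows "grV (Al s) \<le> grV (Al n) - 2 * int n"
proof -
  from assms(2) have "grV (Al s) \<le> grV (Al (n - 1))"
  proof (induction rule: inc_induct)
    case (step m)
    then have "grV (Al m) \<le> grV (Al (m + 1))" using assms(1) by (intro grV_lower_range(1)) auto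
    with step show ?case by simp
  qed simp
  then show ?thesis using grd_Bz_n_minus_1(2) by simp
qed

lemma grU_Al_below:
  assumes "n + 1 \<le> s" "s \<le> 2 * n - 1"
  shows "grU (Al s) \<le> grU (Al n) - 2 * int n"
proof -
  from assms(1) have "grU (Al s) \<le> grU (Al (n + 1))"
  proof (induction rule: dec_induct)
    case (step m)
    then have "grU (Al (m + 1)) \<le> grU (Al m)" using assms(2) by (intro grU_upper_range(1)) auto
    with step show ?case by simp
  qed simp
  then show ?thesis using grd_Bz_n(1) by simp
qed

lemma grV_lower_generators:
  assumes "1 \<le> s" "s \<le> n - 2"
  shows "grV (At s) \<le> grV (Al n) - 2 * int n" "grV (Bm s) \<le> grV (Al n) - 2 * int n"
    "grV (Bz s) \<le> grV (Al n) - 2 * int n"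
proof -
  have "grV (Al s) \<le> grV (Al n) - 2 * int n" "grV (Al (s + 1)) \<le> grV (Al n) - 2 * int n"
    using assms by (intro grV_Al_below; simp)+
  with grV_lower_range[OF assms] show "grV (At s) \<le> grV (Al n) - 2 * int n"
    "grV (Bm s) \<le> grV (Al n) - 2 * int n" "grV (Bz s) \<le> grV (Al n) - 2 * int n"
    by linarith+
qed

lemma grU_upper_generators:
  assumes "n + 1 \<le> s" "s \<le> 2 * n - 2"
  shows "grU (At s) \<le> grU (Al n) - 2 * int n" "grU (Bz s) \<le> grU (Al n) - 2 * int n"
    "grU (Bp s) \<le> grU (Al n) - 2 * int n"
proof -
  have "grU (Al s) \<le> grU (Al n) - 2 * int n" "grU (Al (s + 1)) \<le> grU (Al n) - 2 * int n"
    using assms by (intro grU_Al_below; simp)+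
  with grU_upper_range[OF assms] show "grU (At s) \<le> grU (Al n) - 2 * int n"
    "grU (Bz s) \<le> grU (Al n) - 2 * int n" "grU (Bp s) \<le> grU (Al n) - 2 * int n"
    by linarith+
qed

lemma grd_below_Al_n:
  assumes "i \<in> Cbas n" "i \<noteq> Al n"
  shows "grU i \<le> grU (Al n) - 2 * int n + 2 \<or> grV i \<le> grV (Al n) - 2 * int n"
proof (cases i)
  case (Al s)
  with assms show ?thesis
    using grV_Al_below[of s] grU_Al_below[of s] by (cases "s < n") auto
next
  case (At s)
  with assms show ?thesis
    using grV_lower_generators(1)[of s] grU_upper_generators(1)[of s] by force
next
  case (Bm s)
  with assms show ?thesis using grV_lower_generators(2)[of s] by simp
next
  case (Bz s)
  consider "s \<le> n - 2" | "s = n - 1" | "s = n" | "n + 1 \<le> s" by linarith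
  then show ?thesis
    using assms Bz grV_lower_generators(3)[of s] grd_Bz_n_minus_1(3) grd_Bz_n(2)
      grU_upper_generators(2)[of s]
    by cases auto
next
  case (Bp s)
  with assms show ?thesis using grU_upper_generators(3)[of s] by simp
qed

lemma even_card_two_point_support:
  assumes "P \<noteq> Q" "P \<in> A" "Q \<in> A" "\<And>i. f i \<noteq> 0 \<longleftrightarrow> i = P \<or> i = Q"
  shows "even (card {i \<in> A. f i \<noteq> 0})"
proof -
  have "{i \<in> A. f i \<noteq> 0} = {P, Q}" using assms(2-4) by auto
  with assms(1) show ?thesis by simp
qed

lemma even_card_Bz_column: "even (card {i \<in> Cbas n. Cdif n i (Bz s) \<noteq> 0})"
proof -
  consider "1 \<le> s \<and> s \<le> n - 2" | "s = n - 1" | "s = n" | "n + 1 \<le> s \<and> s \<le> 2 * n - 2"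
    | "s = 0 \<or> 2 * n - 2 < s" by linarith
  then show ?thesis
  proof cases
    case 1
    then show ?thesis by (intro even_card_two_point_support[of "Al (s + 1)" "At s"]) auto
  next
    case 2
    then show ?thesis unfolding 2 Cdif_Bz_n_minus_1
      by (intro even_card_two_point_support[of "Al (n - 1)" "Al n"]) (use n_ge_3 in auto)
  next
    case 3
    then show ?thesis unfolding 3 Cdif_Bz_n
      by (intro even_card_two_point_support[of "Al n" "Al (n + 1)"]) (use n_ge_3 in auto)
  next
    case 4
    then have "\<not> s \<le> n - 2" "\<not> (n - 1 \<le> s \<and> s \<le> n)" by auto
    with 4 show ?thesis by (intro even_card_two_point_support[of "Al s" "At s"]) auto
  next
    case 5
    then have "\<not> (1 \<le> s \<and> s \<le> n - 2)" "\<not> (n - 1 \<le> s \<and> s \<le> n)"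
      "\<not> (n + 1 \<le> s \<and> s \<le> 2 * n - 2)"
      using n_ge_3 by auto
    then show ?thesis by simp
  qed
qed

lemma even_columns_Cn: "even_columns (Cn n gr)"
  unfolding even_columns_def Cn_simps
proof
  fix j
  show "even (card {i \<in> Cbas n. Cdif n i j \<noteq> 0})"
  proof (cases j)
    case (Bm s)
    show ?thesis
    proof (cases "1 \<le> s \<and> s \<le> n - 2")
      case True
      with Bm show ?thesis by (intro even_card_two_point_support[of "Al s" "At s"]) auto
    qed (simp add: Bm)
  next
    case (Bz s)
    show ?thesis unfolding Bz by (rule even_card_Bz_column)
  next
    case (Bp s)
    show ?thesis
    proof (cases "n + 1 \<le> s \<and> s \<le> 2 * n - 2")
      case True
      with Bp show ?thesis by (intro even_card_two_point_support[of "Al (s + 1)" "At s"]) auto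
    qed (simp add: Bp)
  qed simp_all
qed

lemma Uapp_Cdif_Bz:
  "Uapp (Cbas n) (Cdif n) (unit_vec (Bz (n - 1))) = (\<lambda>i. monom 1 (tri + 1) * Ucycle n i)"
proof
  fix i
  have Bz: "Bz (n - 1) \<in> Cbas n" and "Al (n - 1) \<noteq> Al n" using n_ge_3 by auto
  moreover have "monom (1::bit) (tri + n) = monom 1 (tri + 1) * monom 1 (n - 1)"
    using n_ge_3 by (simp add: mult_monom)
  ultimately show "Uapp (Cbas n) (Cdif n) (unit_vec (Bz (n - 1))) i = monom 1 (tri + 1) * Ucycle n i"
    unfolding Uapp_unit_vec[OF finite_Cbas Bz] Cdif_Bz_n_minus_1 Ucycle_def
    by (simp add: poly_mono_1)
qed

lemma monom_dvd_Uapp_Cdif_Al: "monom 1 (tri + 1) dvd Uapp (Cbas n) (Cdif n) w (Al n)"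
  unfolding Uapp_def
proof (intro dvd_sum dvd_mult2)
  fix k
  show "monom 1 (tri + 1) dvd poly (Cdif n (Al n) k) 1"
    using n_ge_3 by (simp add: Cdif_Al_n_row poly_mono_1 monom_1_dvd_monom_1_iff)
qed

lemma Ucycle_image_boundary:
  assumes D: "knotlike D" and F: "local_map (Cn n gr) D F"
  obtains w where "w \<in> Uvec (bas D)" "Uapp (Cbas n) F (Ucycle n) = Uapp (bas D) (dmat D) w"
proof -
  obtain c1 c2 where hom: "hom_map (Cn n gr) D F c1 c2" and "chain_map (Cn n gr) D F"
    using F unfolding local_map_def by blast
  note chain = Uapp_chain_map[OF this(2), unfolded Cn_simps]
  have vec: "Uapp (Cbas n) F v \<in> Uvec (bas D)" for v
    by (intro Uapp_in_Uvec hom_map_outside[OF hom])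
  show ?thesis
  proof (rule knotlike_torsion_free[OF D vec _ _ vec])
    show "Uapp (bas D) (dmat D) (Uapp (Cbas n) F (Ucycle n)) = (\<lambda>_. 0)"
      unfolding chain[symmetric] Uapp_Cdif_Ucycle Uapp_zero ..
    show "Uapp (bas D) (dmat D) (Uapp (Cbas n) F (unit_vec (Bz (n - 1)))) =
        (\<lambda>i. monom 1 (tri + 1) * Uapp (Cbas n) F (Ucycle n) i)"
      unfolding chain[symmetric] Uapp_Cdif_Bz Uapp_scale ..
    show "monom 1 (tri + 1) \<noteq> (0 :: bit poly)" by simp
  qed (rule that)
qed

lemma comp_Ucycle_coeff_Al:
  assumes h: "hom_map (Cn n gr) (Cn n gr) h c1 c2"
    and c: "c1 > - 2 * int n + 2" "c2 > - 2 * int n"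
    and column: "h i (Al n) \<noteq> 0"
  obtains p where "p < n - 1" "Uapp (Cbas n) h (Ucycle n) (Al n) = monom 1 p"
proof -
  note entry = hom_map_nonzero_entry[OF h, unfolded Cn_simps]
  have "i = Al n"
  proof (rule ccontr)
    assume "i \<noteq> Al n"
    obtain p q where "i \<in> Cbas n"
      and "grU i = grU (Al n) + c1 + 2 * int p" "grV i = grV (Al n) + c2 + 2 * int q"
      using entry[OF column] by blast
    with grd_below_Al_n[OF _ \<open>i \<noteq> Al n\<close>] c show False by force
  qed
  with column obtain p q where diag: "h (Al n) (Al n) = mono p q"
    and "grU (Al n) = grU (Al n) + c1 + 2 * int p"
    using entry by blast
  with c have "p < n - 1" by linarith
  have off_diag: "h (Al n) (Al (n - 1)) = 0"
  proof (rule ccontr)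
    assume "h (Al n) (Al (n - 1)) \<noteq> 0"
    then obtain p' where "grU (Al n) = grU (Al (n - 1)) + c1 + 2 * int p'"
      using entry by blast
    with grd_Bz_n_minus_1(1) c show False by linarith
  qed
  have "poly (h (Al n) k) 1 * Ucycle n k = (if k = Al n then monom 1 p else 0)" for k
    using off_diag by (simp add: Ucycle_def diag poly_mono_1)
  moreover have "Al n \<in> Cbas n" using n_ge_3 by simp
  ultimately have "Uapp (Cbas n) h (Ucycle n) (Al n) = monom 1 p"
    by (simp add: Uapp_def finite_Cbas)
  with \<open>p < n - 1\<close> that show ?thesis by blast
qed

end

theorem lemma2p12:
  fixes n :: nat and gr :: "gen \<Rightarrow> int \<times> int"
    and D :: "'d fcx" and F :: "'d \<Rightarrow> gen \<Rightarrow> R"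
  assumes "n \<ge> 3"
    and "is_fcx (Cn n gr)"
    and "is_fcx D"
    and "knotlike D"
    and "local_map (Cn n gr) D F"
  shows "\<not> (\<exists>(G :: gen \<Rightarrow> 'd \<Rightarrow> R) c1 c2. local_map D (Cn n gr) G
            \<and> hom_map (Cn n gr) (Cn n gr) (mat_comp (bas D) G F) c1 c2
            \<and> c1 > - 2 * int n + 2 \<and> c2 > - 2 * int n)"
proof (intro notI, elim exE conjE)
  fix G :: "gen \<Rightarrow> 'd \<Rightarrow> R" and c1 c2
  assume G: "local_map D (Cn n gr) G"
    and h: "hom_map (Cn n gr) (Cn n gr) (mat_comp (bas D) G F) c1 c2"
    and c: "c1 > - 2 * int n + 2" "c2 > - 2 * int n"
  interpret Cn_complex n gr using assms(1,2) by unfold_locales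
  have Al_n: "Al n \<in> Cbas n" using n_ge_3 by simp
  obtain i where "mat_comp (bas D) G F i (Al n) \<noteq> 0"
    using local_map_comp_column_nonzero[OF assms(5) G, unfolded Cn_simps, OF finite_Cbas Al_n]
      unit_vec_not_localized_boundary[OF is_fcx_Cn even_columns_Cn, unfolded Cn_simps, OF Al_n]
    by auto
  then obtain p where "p < n - 1"
    and p: "Uapp (Cbas n) (mat_comp (bas D) G F) (Ucycle n) (Al n) = monom 1 p"
    using comp_Ucycle_coeff_Al[OF h c] by blast
  obtain w where "Uapp (Cbas n) F (Ucycle n) = Uapp (bas D) (dmat D) w"
    using Ucycle_image_boundary[OF assms(4,5)] by blast
  then have "Uapp (Cbas n) (mat_comp (bas D) G F) (Ucycle n) =
      Uapp (Cbas n) (Cdif n) (Uapp (bas D) G w)"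
    using Uapp_chain_map[of D "Cn n gr" G w] G
    by (simp add: Uapp_mat_comp[symmetric] local_map_def)
  then have "monom 1 (tri + 1) dvd (monom 1 p :: bit poly)"
    using p monom_dvd_Uapp_Cdif_Al by metis
  with \<open>p < n - 1\<close> n_le_tri show False by (simp add: monom_1_dvd_monom_1_iff)
qed

end
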